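(* There exists a universal constant $\alpha>1/60$ such that for every $n\ge 1$ and every set $K\subseteq\mathbb{R}^n$ that is star-shaped with respect to the origin, \[ \gamma_n(\sqrt{n}\,K)\ge \alpha\,\sigma_{n-1}(K)\quad\text{and}\quad \gamma_n\big((\sqrt{n}\,K)^c\big)\ge \alpha\,\sigma_{n-1}(K^c). \]
   Context: $\gamma_n$ denotes the standard Gaussian probability measure on $\mathbb{R}^n$. $\sigma_{n-1}$ denotes the normalized rotation-invariant (Haar) probability measure on the sphere $S^{n-1}=\{x\in\mathbb{R}^n:|x|=1\}$, and for a set $A\subseteq\mathbb{R}^n$ we write $\sigma_{n-1}(A)$ for $\sigma_{n-1}(A\cap S^{n-1})$. $A^c$ denotes the complement $\mathbb{R}^n\setminus A$. A set $K$ is star-shaped with respect to the origin if $\lambda x\in K$ for all $x\in K$ and $\lambda\in[0,1]$. *)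

theory Defs
  imports "HOL-Analysis.Analysis"
begin

text \<open>Euclidean space R^n, modelled as extensional functions on {..<n},
  with Lebesgue (Borel product) measure.\<close>
definition leb_n :: "nat \<Rightarrow> (nat \<Rightarrow> real) measure" where
  "leb_n n = PiM {..<n} (\<lambda>_. lborel)"

definition vnorm_n :: "nat \<Rightarrow> (nat \<Rightarrow> real) \<Rightarrow> real" where
  "vnorm_n n x = sqrt (\<Sum>i<n. (x i)^2)"

definition vscale_n :: "nat \<Rightarrow> real \<Rightarrow> (nat \<Rightarrow> real) \<Rightarrow> (nat \<Rightarrow> real)" where
  "vscale_n n c x = (\<lambda>i\<in>{..<n}. c * x i)"

definition gauss_n :: "nat \<Rightarrow> (nat \<Rightarrow> real) measure" where
  "gauss_n n = density (leb_n n)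
     (\<lambda>x. ennreal ((2 * pi) powr (- real n / 2) * exp (- ((vnorm_n n x) ^ 2) / 2)))"

definition sphere_n :: "nat \<Rightarrow> (nat \<Rightarrow> real) set" where
  "sphere_n n = {x \<in> space (leb_n n). vnorm_n n x = 1}"

definition sphcone_n :: "nat \<Rightarrow> (nat \<Rightarrow> real) set \<Rightarrow> (nat \<Rightarrow> real) set" where
  "sphcone_n n A = {vscale_n n t x | t x. t \<in> {0..1} \<and> x \<in> A \<inter> sphere_n n}"

text \<open>Normalized surface (Haar) measure sigma_{n-1}(A) = sigma_{n-1}(A \<inter> S^{n-1}),
  via the cone-measure formula vol(cone over A) / vol(unit ball).\<close>
definition sigma_n :: "nat \<Rightarrow> (nat \<Rightarrow> real) set \<Rightarrow> real" where
  "sigma_n n A = measure (leb_n n) (sphcone_n n A) / measure (leb_n n) (sphcone_n n UNIV)"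

definition star_shaped_n :: "nat \<Rightarrow> (nat \<Rightarrow> real) set \<Rightarrow> bool" where
  "star_shaped_n n K = (\<forall>x\<in>K. \<forall>t\<in>{0..1}. vscale_n n t x \<in> K)"

end

theory Submission
  imports Defs "HOL-Probability.Distributions"
begin

(* Polar coordinates: the Gaussian measure of the sector {x. x/|x| in D, |x| in R} is
   sigma_{n-1}(D) times the probability that a chi-distributed radius with n degrees of freedom
   lies in R. For star-shaped K, sqrt n K contains the sector over K with |x| <= sqrt n, and its
   complement contains the sector over the complement of K with |x| > sqrt n. Both radial
   probabilities are at least 1/40 because p(z) = (60 z + 25 z^2 - z^4) / 400 lies below the
   indicator of z > 0, while for z = +-(|x|^2 - n) / sqrt (2 n) the central moments 0, 2n and
   12 n (n + 4) of |x|^2 give E p(z) = (22 - 12 / n) / 400 >= 1/40. *)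

section \<open>Directions and radial cones in \<open>\<real>\<^sup>n\<close>\<close>

definition origin_n :: "nat \<Rightarrow> nat \<Rightarrow> real" where
  "origin_n n = (\<lambda>i\<in>{..<n}. 0)"

(* At the origin this is the origin again, since 1 / 0 = 0. *)
definition direction_n :: "nat \<Rightarrow> (nat \<Rightarrow> real) \<Rightarrow> nat \<Rightarrow> real" where
  "direction_n n x = vscale_n n (1 / vnorm_n n x) x"

definition radial_cone_n :: "nat \<Rightarrow> (nat \<Rightarrow> real) set \<Rightarrow> (nat \<Rightarrow> real) set" where
  "radial_cone_n n D = {x \<in> space (leb_n n). vnorm_n n x \<noteq> 0 \<and> direction_n n x \<in> D}"

definition cball_n :: "nat \<Rightarrow> real \<Rightarrow> (nat \<Rightarrow> real) set" where
  "cball_n n r = {x \<in> space (leb_n n). vnorm_n n x \<le> r}"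

lemma space_leb_n: "space (leb_n n) = PiE {..<n} (\<lambda>_. UNIV)"
  by (simp add: leb_n_def space_PiM)

lemma vnorm_n_measurable [measurable]: "vnorm_n n \<in> borel_measurable (leb_n n)"
  unfolding vnorm_n_def[abs_def] leb_n_def by measurable

lemma vscale_n_measurable [measurable]: "vscale_n n c \<in> leb_n n \<rightarrow>\<^sub>M leb_n n"
  unfolding vscale_n_def[abs_def] leb_n_def by measurable

lemma direction_n_measurable [measurable]: "direction_n n \<in> leb_n n \<rightarrow>\<^sub>M leb_n n"
  unfolding direction_n_def[abs_def] vscale_n_def leb_n_def vnorm_n_def by measurable

lemma vscale_n_in_space [simp]: "vscale_n n c x \<in> space (leb_n n)"
  by (auto simp: vscale_n_def space_leb_n)

lemma vnorm_n_nonneg [simp]: "0 \<le> vnorm_n n x"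
  by (simp add: vnorm_n_def sum_nonneg)

lemma vnorm_n_vscale_n: "vnorm_n n (vscale_n n c x) = \<bar>c\<bar> * vnorm_n n x"
proof -
  have "(\<Sum>i<n. (vscale_n n c x i)\<^sup>2) = c\<^sup>2 * (\<Sum>i<n. (x i)\<^sup>2)"
    by (simp add: vscale_n_def sum_distrib_left power_mult_distrib)
  then show ?thesis
    by (simp add: vnorm_n_def real_sqrt_mult)
qed

lemma vscale_n_vscale_n: "vscale_n n a (vscale_n n b x) = vscale_n n (a * b) x"
  by (auto simp: vscale_n_def fun_eq_iff)

lemma vscale_n_one: "x \<in> space (leb_n n) \<Longrightarrow> vscale_n n 1 x = x"
  by (auto simp: vscale_n_def space_leb_n fun_eq_iff PiE_def extensional_def)

lemma vscale_n_zero: "vscale_n n 0 x = origin_n n"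
  by (simp add: vscale_n_def origin_n_def)

lemma vnorm_n_eq_0_iff:
  assumes "x \<in> space (leb_n n)"
  shows "vnorm_n n x = 0 \<longleftrightarrow> x = origin_n n"
proof -
  have "vnorm_n n x = 0 \<longleftrightarrow> (\<Sum>i<n. (x i)\<^sup>2) = 0"
    by (simp add: vnorm_n_def sum_nonneg)
  also have "\<dots> \<longleftrightarrow> (\<forall>i<n. x i = 0)"
    by (auto simp: sum_nonneg_eq_0_iff)
  also have "\<dots> \<longleftrightarrow> x = origin_n n"
    using assms by (auto simp: origin_n_def space_leb_n PiE_def extensional_def fun_eq_iff)
  finally show ?thesis .
qed

lemma abs_le_vnorm_n:
  assumes "i < n"
  shows "\<bar>x i\<bar> \<le> vnorm_n n x"
proof -
  have "(x i)\<^sup>2 \<le> (\<Sum>j<n. (x j)\<^sup>2)"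
    using assms by (intro member_le_sum) auto
  then show ?thesis
    unfolding vnorm_n_def by (metis real_sqrt_abs real_sqrt_le_mono)
qed

lemma direction_n_vscale_n: "0 < c \<Longrightarrow> direction_n n (vscale_n n c x) = direction_n n x"
  by (simp add: direction_n_def vnorm_n_vscale_n vscale_n_vscale_n)

lemma vscale_n_vnorm_n_direction_n:
  "x \<in> space (leb_n n) \<Longrightarrow> vnorm_n n x \<noteq> 0 \<Longrightarrow> vscale_n n (vnorm_n n x) (direction_n n x) = x"
  by (simp add: direction_n_def vscale_n_vscale_n vscale_n_one)

lemma sets_radial_cone_n [measurable]:
  assumes "D \<in> sets (leb_n n)"
  shows "radial_cone_n n D \<in> sets (leb_n n)"
proof -
  have "radial_cone_n n D
      = {x \<in> space (leb_n n). vnorm_n n x \<noteq> 0} \<inter> (direction_n n -` D \<inter> space (leb_n n))"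
    by (auto simp: radial_cone_n_def)
  also have "\<dots> \<in> sets (leb_n n)"
    using assms by measurable
  finally show ?thesis .
qed

lemma radial_cone_n_UNIV: "radial_cone_n n UNIV = space (leb_n n) - {origin_n n}"
  by (auto simp: radial_cone_n_def vnorm_n_eq_0_iff)

lemma sets_cball_n [measurable]: "cball_n n r \<in> sets (leb_n n)"
  unfolding cball_n_def by measurable

section \<open>Scaling of Lebesgue measure\<close>

interpretation lborel_product: product_sigma_finite "\<lambda>_::nat. lborel :: real measure"
  by unfold_locales

lemma emeasure_lborel_vimage_mult:
  assumes "0 < (c::real)" "A \<in> sets borel"
  shows "emeasure lborel ((*) c -` A) = ennreal (inverse c) * emeasure lborel A"
proof -
  have "emeasure lborel ((*) c -` A) = emeasure (distr lborel borel ((*) c)) A"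
    using assms by (subst emeasure_distr) auto
  also have "\<dots> = emeasure (density lborel (\<lambda>_. inverse \<bar>c\<bar>)) A"
    using assms by (subst lborel_distr_mult) auto
  also have "\<dots> = ennreal (inverse c) * emeasure lborel A"
    using assms by (subst emeasure_density_const) auto
  finally show ?thesis .
qed

lemma density_distr_leb_n_vscale_n:
  assumes "0 < c"
  shows "density (distr (leb_n n) (leb_n n) (vscale_n n c)) (\<lambda>_. ennreal (c ^ n)) = leb_n n"
  unfolding leb_n_def
proof (rule lborel_product.PiM_eqI)
  fix A :: "nat \<Rightarrow> real set"
  assume A: "\<And>i. i \<in> {..<n} \<Longrightarrow> A i \<in> sets lborel"
  let ?L = "PiM {..<n} (\<lambda>_. lborel :: real measure)"
  have vimage: "vscale_n n c -` PiE {..<n} A \<inter> space ?L = PiE {..<n} (\<lambda>i. (*) c -` A i)"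
    by (auto simp: vscale_n_def space_PiM PiE_def Pi_def extensional_def)
  have "emeasure (density (distr ?L ?L (vscale_n n c)) (\<lambda>_. ennreal (c ^ n))) (PiE {..<n} A)
      = ennreal (c ^ n) * emeasure ?L (PiE {..<n} (\<lambda>i. (*) c -` A i))"
    using A vscale_n_measurable[of n c]
    by (simp add: leb_n_def emeasure_density_const emeasure_distr vimage sets_PiM_I_finite)
  also have "\<dots> = ennreal (c ^ n) * (\<Prod>i<n. ennreal (inverse c) * emeasure lborel (A i))"
    using A assms measurable_sets[of "(*) c" borel borel]
    by (subst lborel_product.emeasure_PiM) (auto simp: emeasure_lborel_vimage_mult)
  also have "\<dots> = (\<Prod>i<n. emeasure lborel (A i))"
    using assms
    by (simp add: prod.distrib ennreal_power[symmetric] mult.assoc[symmetric]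
        ennreal_mult[symmetric] power_mult_distrib[symmetric])
  finally show "emeasure (density (distr ?L ?L (vscale_n n c)) (\<lambda>_. ennreal (c ^ n))) (PiE {..<n} A)
      = (\<Prod>i<n. emeasure lborel (A i))" .
qed simp_all

lemma vscale_n_image_eq_vimage:
  assumes "c \<noteq> 0" "E \<subseteq> space (leb_n n)"
  shows "vscale_n n c ` E = vscale_n n (1 / c) -` E \<inter> space (leb_n n)"
proof (intro equalityI subsetI)
  fix y
  assume "y \<in> vscale_n n c ` E"
  with assms show "y \<in> vscale_n n (1 / c) -` E \<inter> space (leb_n n)"
    by (auto simp: vscale_n_vscale_n vscale_n_one subsetD)
next
  fix y
  assume y: "y \<in> vscale_n n (1 / c) -` E \<inter> space (leb_n n)"
  then have "y = vscale_n n c (vscale_n n (1 / c) y)"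
    using assms by (simp add: vscale_n_vscale_n vscale_n_one)
  with y show "y \<in> vscale_n n c ` E"
    by blast
qed

lemma sets_vscale_n_image:
  "c \<noteq> 0 \<Longrightarrow> E \<in> sets (leb_n n) \<Longrightarrow> vscale_n n c ` E \<in> sets (leb_n n)"
  by (simp add: vscale_n_image_eq_vimage sets.sets_into_space)

lemma emeasure_vscale_n_image:
  assumes "0 < c" "E \<in> sets (leb_n n)"
  shows "emeasure (leb_n n) (vscale_n n c ` E) = ennreal (c ^ n) * emeasure (leb_n n) E"
proof -
  have "emeasure (leb_n n) E
      = ennreal ((1 / c) ^ n) * emeasure (leb_n n) (vscale_n n (1 / c) -` E \<inter> space (leb_n n))"
    using assms
    by (subst density_distr_leb_n_vscale_n[of "1 / c" n, symmetric])
      (simp_all add: emeasure_density_const emeasure_distr)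
  also have "vscale_n n (1 / c) -` E \<inter> space (leb_n n) = vscale_n n c ` E"
    using assms by (simp add: vscale_n_image_eq_vimage sets.sets_into_space)
  finally have "ennreal (c ^ n) * emeasure (leb_n n) E
      = ennreal (c ^ n * (1 / c) ^ n) * emeasure (leb_n n) (vscale_n n c ` E)"
    using assms by (simp add: ennreal_mult mult.assoc)
  also have "c ^ n * (1 / c) ^ n = 1"
    using assms by (simp add: power_mult_distrib[symmetric])
  finally show ?thesis
    by simp
qed

section \<open>Polar coordinates\<close>

definition cone_volume_n :: "nat \<Rightarrow> (nat \<Rightarrow> real) set \<Rightarrow> real" where
  "cone_volume_n n D = measure (leb_n n) (radial_cone_n n D \<inter> cball_n n 1)"

lemma cone_volume_n_nonneg [simp]: "0 \<le> cone_volume_n n D"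
  by (simp add: cone_volume_n_def)

lemma radial_cone_n_Int_cball_n_scale:
  assumes "0 < r"
  shows "radial_cone_n n D \<inter> cball_n n r = vscale_n n r ` (radial_cone_n n D \<inter> cball_n n 1)"
proof (intro equalityI subsetI)
  fix y
  assume y: "y \<in> radial_cone_n n D \<inter> cball_n n r"
  let ?x = "vscale_n n (1 / r) y"
  have "y = vscale_n n r ?x"
    using y assms by (simp add: vscale_n_vscale_n vscale_n_one radial_cone_n_def)
  moreover have "vnorm_n n ?x = vnorm_n n y / r" "direction_n n ?x = direction_n n y"
    using assms by (simp_all add: vnorm_n_vscale_n direction_n_vscale_n)
  then have "?x \<in> radial_cone_n n D \<inter> cball_n n 1"
    using y assms by (simp add: radial_cone_n_def cball_n_def)
  ultimately show "y \<in> vscale_n n r ` (radial_cone_n n D \<inter> cball_n n 1)"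
    by blast
next
  fix y
  assume "y \<in> vscale_n n r ` (radial_cone_n n D \<inter> cball_n n 1)"
  then obtain x where x: "x \<in> radial_cone_n n D \<inter> cball_n n 1" and y: "y = vscale_n n r x"
    by blast
  have "vnorm_n n y = r * vnorm_n n x" "direction_n n y = direction_n n x"
    using assms by (simp_all add: y vnorm_n_vscale_n direction_n_vscale_n)
  moreover have "r * vnorm_n n x \<le> r"
    using x assms by (simp add: cball_n_def mult_left_le)
  ultimately show "y \<in> radial_cone_n n D \<inter> cball_n n r"
    using x assms by (simp add: y radial_cone_n_def cball_n_def)
qed

lemma emeasure_cball_n_one_finite: "emeasure (leb_n n) (cball_n n 1) < \<infinity>"
proof -
  have "x \<in> PiE {..<n} (\<lambda>_. {-1..1})" if "x \<in> cball_n n 1" for x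
  proof -
    have "\<bar>x i\<bar> \<le> 1" if "i < n" for i
      using abs_le_vnorm_n[OF that, of x] \<open>x \<in> cball_n n 1\<close> by (simp add: cball_n_def)
    with \<open>x \<in> cball_n n 1\<close> show ?thesis
      by (simp add: cball_n_def space_leb_n PiE_iff abs_le_iff)
  qed
  moreover have "PiE {..<n} (\<lambda>_. {-1..1::real}) \<in> sets (leb_n n)"
    unfolding leb_n_def by (rule sets_PiM_I_finite) auto
  ultimately have "emeasure (leb_n n) (cball_n n 1) \<le> emeasure (leb_n n) (PiE {..<n} (\<lambda>_. {-1..1}))"
    by (intro emeasure_mono) auto
  also have "\<dots> = (\<Prod>i<n. emeasure lborel {-1..1::real})"
    unfolding leb_n_def by (rule lborel_product.emeasure_PiM) auto
  also have "\<dots> < \<infinity>"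
    by (simp add: power_less_top_ennreal)
  finally show ?thesis .
qed

lemma emeasure_radial_cone_n_Int_cball_n:
  assumes "1 \<le> n" "radial_cone_n n D \<in> sets (leb_n n)" "0 \<le> r"
  shows "emeasure (leb_n n) (radial_cone_n n D \<inter> cball_n n r) = ennreal (r ^ n * cone_volume_n n D)"
proof (cases "r = 0")
  case True
  have "vnorm_n n x \<noteq> 0 \<Longrightarrow> \<not> vnorm_n n x \<le> 0" for x
    using vnorm_n_nonneg[of n x] by linarith
  then have "radial_cone_n n D \<inter> cball_n n r = {}"
    using True by (auto simp: radial_cone_n_def cball_n_def)
  with True assms(1) show ?thesis
    by (simp add: zero_power)
next
  case False
  with assms have r: "0 < r"
    by simp
  have "emeasure (leb_n n) (radial_cone_n n D \<inter> cball_n n 1) < \<infinity>"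
    by (rule le_less_trans[OF emeasure_mono emeasure_cball_n_one_finite]) auto
  then have "emeasure (leb_n n) (radial_cone_n n D \<inter> cball_n n 1) = ennreal (cone_volume_n n D)"
    by (simp add: cone_volume_n_def emeasure_eq_ennreal_measure less_top)
  with r assms show ?thesis
    unfolding radial_cone_n_Int_cball_n_scale[OF r]
    by (simp add: emeasure_vscale_n_image ennreal_mult')
qed

lemma emeasure_radial_cone_n_annulus:
  assumes "1 \<le> n" "radial_cone_n n D \<in> sets (leb_n n)" "a \<le> b"
  shows "emeasure (leb_n n) (radial_cone_n n D \<inter> (vnorm_n n -` {a<..b} \<inter> space (leb_n n)))
    = ennreal (cone_volume_n n D * (max b 0 ^ n - max a 0 ^ n))"
proof -
  let ?C = "radial_cone_n n D"
  have "a < vnorm_n n x \<and> vnorm_n n x \<le> b \<longleftrightarrow> vnorm_n n x \<le> max b 0 \<and> \<not> vnorm_n n x \<le> max a 0"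
    if "x \<in> ?C" for x
  proof -
    have "vnorm_n n x \<noteq> 0"
      using that by (simp add: radial_cone_n_def)
    then have "0 < vnorm_n n x"
      using vnorm_n_nonneg[of n x] by linarith
    then show ?thesis
      by (auto simp: max_def)
  qed
  then have "?C \<inter> (vnorm_n n -` {a<..b} \<inter> space (leb_n n)) = ?C \<inter> cball_n n (max b 0) - ?C \<inter> cball_n n (max a 0)"
    by (auto simp: cball_n_def radial_cone_n_def)
  moreover have "?C \<inter> cball_n n (max a 0) \<subseteq> ?C \<inter> cball_n n (max b 0)"
    using assms(3) by (auto simp: cball_n_def)
  ultimately have "emeasure (leb_n n) (?C \<inter> (vnorm_n n -` {a<..b} \<inter> space (leb_n n)))
      = emeasure (leb_n n) (?C \<inter> cball_n n (max b 0)) - emeasure (leb_n n) (?C \<inter> cball_n n (max a 0))"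
    using assms emeasure_radial_cone_n_Int_cball_n[OF assms(1,2), of "max a 0"]
    by (simp add: emeasure_Diff)
  also have "\<dots> = ennreal (max b 0 ^ n * cone_volume_n n D) - ennreal (max a 0 ^ n * cone_volume_n n D)"
    using assms by (simp add: emeasure_radial_cone_n_Int_cball_n)
  also have "\<dots> = ennreal (cone_volume_n n D * (max b 0 ^ n - max a 0 ^ n))"
    using assms by (subst ennreal_minus) (auto simp: cone_volume_n_def algebra_simps power_mono)
  finally show ?thesis .
qed

lemma emeasure_radial_density_Ioc:
  assumes "0 \<le> w" "a \<le> b"
  shows "emeasure (density lborel (\<lambda>r. ennreal (w * real n * r ^ (n - 1)) * indicator {0<..} r)) {a<..b}
    = ennreal (w * (max b 0 ^ n - max a 0 ^ n))"
proof -
  let ?f = "\<lambda>r. ennreal (w * real n * r ^ (n - 1))"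
  have "AE r in lborel. ?f r * indicator {0<..} r * indicator {a<..b} r = ?f r * indicator {max a 0..max b 0} r"
    using AE_lborel_singleton[of "max a 0"]
  proof eventually_elim
    case (elim r)
    then have "r \<in> {0<..} \<inter> {a<..b} \<longleftrightarrow> r \<in> {max a 0..max b 0}"
      by (auto simp: max_def)
    then show ?case
      by (auto split: split_indicator)
  qed
  then have "emeasure (density lborel (\<lambda>r. ?f r * indicator {0<..} r)) {a<..b}
      = (\<integral>\<^sup>+r. ?f r * indicator {max a 0..max b 0} r \<partial>lborel)"
    by (subst emeasure_density) (auto intro: nn_integral_cong_AE)
  also have "\<dots> = ennreal (w * max b 0 ^ n - w * max a 0 ^ n)"
    using assms by (intro nn_integral_FTC_Icc) (auto intro!: derivative_eq_intros)
  finally show ?thesis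
    by (simp add: algebra_simps)
qed

lemma measure_eqI_Ioc:
  fixes M N :: "real measure"
  assumes "sets M = sets borel" "sets N = sets borel"
    and "\<And>a b. a \<le> b \<Longrightarrow> emeasure M {a<..b} = emeasure N {a<..b}"
    and "\<And>a b. a \<le> b \<Longrightarrow> emeasure M {a<..b} < \<infinity>"
  shows "M = N"
proof (rule measure_eqI_generator_eq_countable[where \<Omega> = UNIV and E = "range (\<lambda>(a, b). {a<..b})"
      and A = "range (\<lambda>k::nat. {- real k<..real k})"])
  show "Int_stable (range (\<lambda>(a, b). {a<..b::real}))"
  proof (rule Int_stableI)
    fix X Y
    assume "X \<in> range (\<lambda>(a, b). {a<..b::real})" "Y \<in> range (\<lambda>(a, b). {a<..b::real})"
    then obtain a b c d where "X = {a<..b}" "Y = {c<..d}"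
      by auto
    then have "X \<inter> Y = {max a c<..min b d}"
      by auto
    then show "X \<inter> Y \<in> range (\<lambda>(a, b). {a<..b::real})"
      by (auto intro!: image_eqI[where x = "(max a c, min b d)"])
  qed
  show "emeasure M X = emeasure N X" if "X \<in> range (\<lambda>(a, b). {a<..b})" for X
    using that assms(3) by (cases "X = {}") (auto simp: not_le)
  show "emeasure M X \<noteq> \<infinity>" if "X \<in> range (\<lambda>k::nat. {- real k<..real k})" for X
  proof -
    from that obtain k :: nat where "X = {- real k<..real k}"
      by blast
    with assms(4)[of "- real k" "real k"] show ?thesis
      by simp
  qed
  show "sets M = sigma_sets UNIV (range (\<lambda>(a, b). {a<..b}))"
    "sets N = sigma_sets UNIV (range (\<lambda>(a, b). {a<..b}))"
    using assms(1,2) by (simp_all add: borel_sigma_sets_Ioc)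
  show "range (\<lambda>k::nat. {- real k<..real k}) \<subseteq> range (\<lambda>(a, b). {a<..b})"
    by (auto intro!: image_eqI[where x = "(- real k, real k)" for k])
  show "\<Union> (range (\<lambda>k::nat. {- real k<..real k})) = UNIV"
  proof (intro equalityI subsetI)
    fix x :: real
    obtain k :: nat where "\<bar>x\<bar> < real k"
      using reals_Archimedean2 by blast
    then have "x \<in> {- real k<..real k}"
      by auto
    then show "x \<in> \<Union> (range (\<lambda>k::nat. {- real k<..real k}))"
      by blast
  qed simp
qed auto

lemma distr_radial_cone_n_vnorm_n:
  assumes n: "1 \<le> n" and C: "radial_cone_n n D \<in> sets (leb_n n)"
  shows "distr (density (leb_n n) (indicator (radial_cone_n n D))) borel (vnorm_n n)
    = density lborel (\<lambda>r. ennreal (cone_volume_n n D * real n * r ^ (n - 1)) * indicator {0<..} r)"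
    (is "?M = ?N")
proof (rule measure_eqI_Ioc)
  fix a b :: real
  assume ab: "a \<le> b"
  have "emeasure ?M {a<..b}
      = emeasure (leb_n n) (radial_cone_n n D \<inter> (vnorm_n n -` {a<..b} \<inter> space (leb_n n)))"
    using C by (simp add: emeasure_distr emeasure_restricted)
  also have "\<dots> = ennreal (cone_volume_n n D * (max b 0 ^ n - max a 0 ^ n))"
    using n C ab by (rule emeasure_radial_cone_n_annulus)
  finally show "emeasure ?M {a<..b} = emeasure ?N {a<..b}" "emeasure ?M {a<..b} < \<infinity>"
    using emeasure_radial_density_Ioc[OF cone_volume_n_nonneg ab, of n D] by simp_all
qed simp_all

lemma nn_integral_radial_cone_n:
  assumes "1 \<le> n" "radial_cone_n n D \<in> sets (leb_n n)" and [measurable]: "g \<in> borel_measurable borel"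
  shows "(\<integral>\<^sup>+x. indicator (radial_cone_n n D) x * g (vnorm_n n x) \<partial>leb_n n)
    = (\<integral>\<^sup>+r. ennreal (cone_volume_n n D * real n * r ^ (n - 1)) * indicator {0<..} r * g r \<partial>lborel)"
proof -
  have "(\<integral>\<^sup>+x. indicator (radial_cone_n n D) x * g (vnorm_n n x) \<partial>leb_n n)
      = (\<integral>\<^sup>+x. g (vnorm_n n x) \<partial>density (leb_n n) (indicator (radial_cone_n n D)))"
    using assms by (simp add: nn_integral_density)
  also have "\<dots> = (\<integral>\<^sup>+r. g r \<partial>distr (density (leb_n n) (indicator (radial_cone_n n D))) borel (vnorm_n n))"
    using assms by (simp add: nn_integral_distr)
  also have "\<dots> = (\<integral>\<^sup>+r. ennreal (cone_volume_n n D * real n * r ^ (n - 1)) * indicator {0<..} r * g r \<partial>lborel)"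
    using assms by (simp add: distr_radial_cone_n_vnorm_n nn_integral_density)
  finally show ?thesis .
qed

section \<open>Surface measure as a ratio of cone volumes\<close>

lemma origin_n_null_sets: "1 \<le> n \<Longrightarrow> {origin_n n} \<in> null_sets (leb_n n)"
proof -
  assume n: "1 \<le> n"
  have origin: "{origin_n n} = PiE {..<n} (\<lambda>_. {0})"
    by (auto simp: origin_n_def PiE_def extensional_def fun_eq_iff)
  have "emeasure (leb_n n) {origin_n n} = (\<Prod>i<n. emeasure lborel {0::real})"
    unfolding origin leb_n_def by (rule lborel_product.emeasure_PiM) auto
  with n have "emeasure (leb_n n) {origin_n n} = 0"
    by (simp add: zero_power)
  moreover have "{origin_n n} \<in> sets (leb_n n)"
    unfolding origin leb_n_def by (rule sets_PiM_I_finite) auto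
  ultimately show ?thesis
    by (simp add: null_sets_def)
qed

lemma sets_radial_cone_n_UNIV: "1 \<le> n \<Longrightarrow> radial_cone_n n UNIV \<in> sets (leb_n n)"
  by (simp add: radial_cone_n_UNIV sets.compl_sets null_setsD2 origin_n_null_sets)

lemma radial_cone_n_Int_cball_n_subset_sphcone_n: "radial_cone_n n A \<inter> cball_n n 1 \<subseteq> sphcone_n n A"
proof
  fix y
  assume y: "y \<in> radial_cone_n n A \<inter> cball_n n 1"
  then have "direction_n n y \<in> A \<inter> sphere_n n"
    by (simp add: radial_cone_n_def cball_n_def sphere_n_def direction_n_def vnorm_n_vscale_n)
  moreover have "y = vscale_n n (vnorm_n n y) (direction_n n y)"
    using y by (simp add: radial_cone_n_def vscale_n_vnorm_n_direction_n)
  ultimately show "y \<in> sphcone_n n A"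
    using y unfolding sphcone_n_def cball_n_def by fastforce
qed

lemma sphcone_n_subset_radial_cone_n_Int_cball_n: "sphcone_n n A \<subseteq> radial_cone_n n A \<inter> cball_n n 1 \<union> {origin_n n}"
proof
  fix y
  assume "y \<in> sphcone_n n A"
  then obtain t x where y: "y = vscale_n n t x" and t: "0 \<le> t" "t \<le> 1"
    and x: "x \<in> A" "x \<in> space (leb_n n)" "vnorm_n n x = 1"
    unfolding sphcone_n_def sphere_n_def by auto
  show "y \<in> radial_cone_n n A \<inter> cball_n n 1 \<union> {origin_n n}"
  proof (cases "t = 0")
    case False
    with t have "0 < t"
      by simp
    moreover have "direction_n n x = x"
      using x by (simp add: direction_n_def vscale_n_one)
    ultimately have "vnorm_n n y = t" "direction_n n y = x"
      using x by (simp_all add: y vnorm_n_vscale_n direction_n_vscale_n)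
    with False t x show ?thesis
      by (simp add: radial_cone_n_def cball_n_def y)
  qed (simp add: y vscale_n_zero)
qed

lemma measure_sphcone_n:
  assumes n: "1 \<le> n" and C: "radial_cone_n n A \<in> sets (leb_n n)"
  shows "measure (leb_n n) (sphcone_n n A) = cone_volume_n n A"
proof -
  have "sphcone_n n A = radial_cone_n n A \<inter> cball_n n 1 \<union> {origin_n n}
      \<or> sphcone_n n A = radial_cone_n n A \<inter> cball_n n 1"
    using radial_cone_n_Int_cball_n_subset_sphcone_n[of n A] sphcone_n_subset_radial_cone_n_Int_cball_n[of n A] by blast
  moreover have "measure (leb_n n) (radial_cone_n n A \<inter> cball_n n 1 \<union> {origin_n n}) = cone_volume_n n A"
    using C by (simp add: cone_volume_n_def measure_Un_null_set origin_n_null_sets[OF n] del: Un_insert_right)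
  ultimately show ?thesis
    by (auto simp: cone_volume_n_def)
qed

lemma sigma_n_eq_cone_volume_n:
  assumes "1 \<le> n" "radial_cone_n n D \<in> sets (leb_n n)"
  shows "sigma_n n D = cone_volume_n n D / cone_volume_n n UNIV"
  using assms by (simp add: sigma_n_def measure_sphcone_n sets_radial_cone_n_UNIV)

section \<open>Moments of the radial density\<close>

(* For m = n - 1 this is, up to normalisation, the density of |x| under the Gaussian measure on
   R^n (the chi distribution with n degrees of freedom). *)
definition radial_weight :: "nat \<Rightarrow> real \<Rightarrow> real" where
  "radial_weight m r = indicator {0..} r * (exp (- r\<^sup>2 / 2) * r ^ m)"

definition radial_moment :: "nat \<Rightarrow> real" where
  "radial_moment m = (\<integral>r. radial_weight m r \<partial>lborel)"

definition half_gaussian_moment :: "nat \<Rightarrow> real" where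
  "half_gaussian_moment m =
    (if even m then sqrt pi / 2 * (fact m / (2 ^ m * fact (m div 2))) else fact (m div 2) / 2)"

lemma radial_weight_nonneg: "0 \<le> radial_weight m r"
  by (simp add: radial_weight_def split: split_indicator)

lemma radial_weight_mult_power: "radial_weight m r * r ^ k = radial_weight (m + k) r"
  by (simp add: radial_weight_def power_add)

lemma has_bochner_integral_half_gaussian_moment:
  "has_bochner_integral lborel (\<lambda>x::real. indicator {0..} x *\<^sub>R (exp (- x\<^sup>2) * x ^ m))
     (half_gaussian_moment m)"
proof (cases "even m")
  case True
  then obtain k where "m = 2 * k"
    by (elim evenE)
  then show ?thesis
    using gaussian_moment_even_pos[of k] by (simp add: half_gaussian_moment_def)
next
  case False
  then obtain k where "m = 2 * k + 1"
    by (elim oddE)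
  then show ?thesis
    using gaussian_moment_odd_pos[of k] by (simp add: half_gaussian_moment_def)
qed

lemma half_gaussian_moment_add_two:
  "half_gaussian_moment (m + 2) = (real m + 1) / 2 * half_gaussian_moment m"
proof (cases "even m")
  case True
  then obtain k where m: "m = 2 * k"
    by (elim evenE)
  have "fact (2 * k + 2) / (2 ^ (2 * k + 2) * fact (k + 1))
      = (2 * real k + 1) / 2 * (fact (2 * k) / (2 ^ (2 * k) * fact k) :: real)"
    by (simp add: divide_simps power_add) (simp add: algebra_simps)
  then show ?thesis
    by (simp add: half_gaussian_moment_def m)
next
  case False
  then obtain k where "m = 2 * k + 1"
    by (elim oddE)
  then show ?thesis
    by (simp add: half_gaussian_moment_def)
qed

lemma has_bochner_integral_radial_weight:
  "has_bochner_integral lborel (radial_weight m) (sqrt 2 ^ (m + 1) * half_gaussian_moment m)"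
proof -
  let ?g = "\<lambda>x::real. indicator {0..} x *\<^sub>R (exp (- x\<^sup>2) * x ^ m)"
  have subst: "radial_weight m (sqrt 2 * x) = sqrt 2 ^ m * ?g x" for x
    by (simp add: radial_weight_def power_mult_distrib zero_le_mult_iff split: split_indicator)
  have g: "has_bochner_integral lborel ?g (half_gaussian_moment m)"
    by (rule has_bochner_integral_half_gaussian_moment)
  then have "integrable lborel (\<lambda>x. radial_weight m (0 + sqrt 2 * x))"
    unfolding add_0 subst by (intro integrable_mult_right) (rule integrable.intros)
  then have "integrable lborel (radial_weight m)"
    using lborel_integrable_real_affine_iff[of "sqrt 2" "radial_weight m" 0] by simp
  moreover have "integral\<^sup>L lborel (radial_weight m) = sqrt 2 * (\<integral>x. radial_weight m (sqrt 2 * x) \<partial>lborel)"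
    using lborel_integral_real_affine[of "sqrt 2" "radial_weight m" 0] by simp
  moreover have "(\<integral>x. radial_weight m (sqrt 2 * x) \<partial>lborel) = sqrt 2 ^ m * half_gaussian_moment m"
    using has_bochner_integral_integral_eq[OF g] by (simp add: subst)
  ultimately show ?thesis
    by (simp add: has_bochner_integral_iff)
qed

lemma integrable_radial_weight: "integrable lborel (radial_weight m)"
  using has_bochner_integral_radial_weight by (rule integrable.intros)

lemma integrable_indicator_radial_weight:
  "R \<in> sets borel \<Longrightarrow> integrable lborel (\<lambda>r. indicator R r * radial_weight m r)"
  using integrable_mult_indicator[of R lborel "radial_weight m"] by (simp add: integrable_radial_weight)

lemma radial_moment_eq: "radial_moment m = sqrt 2 ^ (m + 1) * half_gaussian_moment m"
  unfolding radial_moment_def using has_bochner_integral_radial_weight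
  by (rule has_bochner_integral_integral_eq)

lemma radial_moment_pos: "0 < radial_moment m"
  by (simp add: radial_moment_eq half_gaussian_moment_def)

lemma radial_moment_add_two: "radial_moment (m + 2) = (real m + 1) * radial_moment m"
  unfolding radial_moment_eq half_gaussian_moment_add_two by (simp add: power_add)

lemma radial_moment_add_even:
  "radial_moment (m + 2 * j) = (\<Prod>i<j. real m + 1 + 2 * real i) * radial_moment m"
proof (induction j)
  case (Suc j)
  have "radial_moment (m + 2 * Suc j) = (real (m + 2 * j) + 1) * radial_moment (m + 2 * j)"
    using radial_moment_add_two[of "m + 2 * j"] by simp
  with Suc show ?case
    by (simp add: algebra_simps)
qed simp

lemma has_bochner_integral_radial_weight_power:
  "has_bochner_integral lborel (\<lambda>r. radial_weight m r * r ^ k) (radial_moment (m + k))"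
  by (simp add: radial_weight_mult_power radial_moment_def integrable_radial_weight
      has_bochner_integral_integrable)

lemma radial_central_moments:
  fixes m :: nat
  defines "\<nu> \<equiv> real m + 1"
  shows "has_bochner_integral lborel (\<lambda>r. radial_weight m r * (r\<^sup>2 - \<nu>)) 0"
    and "has_bochner_integral lborel (\<lambda>r. radial_weight m r * (r\<^sup>2 - \<nu>) ^ 2) (2 * \<nu> * radial_moment m)"
    and "has_bochner_integral lborel (\<lambda>r. radial_weight m r * (r\<^sup>2 - \<nu>) ^ 4)
      (12 * \<nu> * (\<nu> + 4) * radial_moment m)"
proof -
  let ?W = "radial_weight m" and ?M = "radial_moment m"
  have M: "radial_moment (m + 2) = \<nu> * ?M" "radial_moment (m + 4) = \<nu> * (\<nu> + 2) * ?M"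
    "radial_moment (m + 6) = \<nu> * (\<nu> + 2) * (\<nu> + 4) * ?M"
    "radial_moment (m + 8) = \<nu> * (\<nu> + 2) * (\<nu> + 4) * (\<nu> + 6) * ?M"
    using radial_moment_add_even[of m 1] radial_moment_add_even[of m 2]
      radial_moment_add_even[of m 3] radial_moment_add_even[of m 4]
    by (simp_all add: \<nu>_def lessThan_nat_numeral algebra_simps)
  note moments = has_bochner_integral_radial_weight_power[of m]
  have r: "r ^ 4 = (r\<^sup>2)\<^sup>2" "r ^ 6 = (r\<^sup>2) ^ 3" "r ^ 8 = (r\<^sup>2) ^ 4" for r :: real
    by (simp_all flip: power_mult)
  have "has_bochner_integral lborel (\<lambda>r. ?W r * r ^ 2 - \<nu> * (?W r * r ^ 0))
      (radial_moment (m + 2) - \<nu> * radial_moment (m + 0))"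
    by (intro has_bochner_integral_diff has_bochner_integral_mult_right moments)
  then show "has_bochner_integral lborel (\<lambda>r. ?W r * (r\<^sup>2 - \<nu>)) 0"
    by (simp add: M algebra_simps del: add_2_eq_Suc')
  have "has_bochner_integral lborel (\<lambda>r. ?W r * r ^ 4 - 2 * \<nu> * (?W r * r ^ 2) + \<nu>\<^sup>2 * (?W r * r ^ 0))
      (radial_moment (m + 4) - 2 * \<nu> * radial_moment (m + 2) + \<nu>\<^sup>2 * radial_moment (m + 0))"
    by (intro has_bochner_integral_diff has_bochner_integral_add has_bochner_integral_mult_right moments)
  then show "has_bochner_integral lborel (\<lambda>r. ?W r * (r\<^sup>2 - \<nu>) ^ 2) (2 * \<nu> * ?M)"
    by (simp add: M r algebra_simps power2_eq_square del: add_2_eq_Suc')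
  have "has_bochner_integral lborel
      (\<lambda>r. ?W r * r ^ 8 - 4 * \<nu> * (?W r * r ^ 6) + 6 * \<nu>\<^sup>2 * (?W r * r ^ 4)
        - 4 * \<nu> ^ 3 * (?W r * r ^ 2) + \<nu> ^ 4 * (?W r * r ^ 0))
      (radial_moment (m + 8) - 4 * \<nu> * radial_moment (m + 6) + 6 * \<nu>\<^sup>2 * radial_moment (m + 4)
        - 4 * \<nu> ^ 3 * radial_moment (m + 2) + \<nu> ^ 4 * radial_moment (m + 0))"
    by (intro has_bochner_integral_diff has_bochner_integral_add has_bochner_integral_mult_right moments)
  then show "has_bochner_integral lborel (\<lambda>r. ?W r * (r\<^sup>2 - \<nu>) ^ 4) (12 * \<nu> * (\<nu> + 4) * ?M)"
    by (simp add: M r algebra_simps power2_eq_square power3_eq_cube power4_eq_xxxx del: add_2_eq_Suc')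
qed

definition tail_polynomial :: "real \<Rightarrow> real" where
  "tail_polynomial z = (60 * z + 25 * z\<^sup>2 - z ^ 4) / 400"

lemma tail_polynomial_le_indicator: "tail_polynomial z \<le> (if 0 < z then 1 else 0)"
proof (cases "0 < z")
  case True
  have "400 - (60 * z + 25 * z\<^sup>2 - z ^ 4) = (z\<^sup>2 - 16)\<^sup>2 + 7 * (z - 30 / 7)\<^sup>2 + 108 / 7"
    by (simp add: algebra_simps power2_eq_square power4_eq_xxxx)
  moreover have "0 \<le> (z\<^sup>2 - 16)\<^sup>2 + 7 * (z - 30 / 7)\<^sup>2 + 108 / 7"
    by (intro add_nonneg_nonneg) auto
  ultimately have "60 * z + 25 * z\<^sup>2 - z ^ 4 \<le> 400"
    by linarith
  with True show ?thesis
    by (simp add: tail_polynomial_def)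
next
  case False
  define w where "w = - z"
  have "60 * z + 25 * z\<^sup>2 - z ^ 4 = - (w * ((w - 3)\<^sup>2 * (w + 6) + 2 * w + 6))"
    by (simp add: w_def algebra_simps power2_eq_square power3_eq_cube power4_eq_xxxx)
  moreover have "0 \<le> w * ((w - 3)\<^sup>2 * (w + 6) + 2 * w + 6)"
    using False by (intro mult_nonneg_nonneg add_nonneg_nonneg) (auto simp: w_def)
  ultimately have "60 * z + 25 * z\<^sup>2 - z ^ 4 \<le> 0"
    by linarith
  with False show ?thesis
    by (simp add: tail_polynomial_def)
qed

lemma has_bochner_integral_radial_weight_tail_polynomial:
  fixes m :: nat and \<epsilon> :: real
  assumes "\<epsilon>\<^sup>2 = 1"
  defines "\<nu> \<equiv> real m + 1"
  defines "z \<equiv> \<lambda>r. \<epsilon> * (r\<^sup>2 - \<nu>) / sqrt (2 * \<nu>)"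
  shows "has_bochner_integral lborel (\<lambda>r. radial_weight m r * tail_polynomial (z r))
    ((22 - 12 / \<nu>) / 400 * radial_moment m)"
proof -
  let ?W = "radial_weight m" and ?M = "radial_moment m" and ?s = "sqrt (2 * \<nu>)"
  have \<nu>: "1 \<le> \<nu>"
    by (simp add: \<nu>_def)
  have "?s ^ 4 = (?s\<^sup>2)\<^sup>2"
    by (simp flip: power_mult)
  then have s: "0 < ?s" "?s\<^sup>2 = 2 * \<nu>" "?s ^ 4 = 4 * \<nu>\<^sup>2"
    using \<nu> by (simp_all add: power2_eq_square)
  have int: "has_bochner_integral lborel
      (\<lambda>r. 60 * \<epsilon> / (400 * ?s) * (?W r * (r\<^sup>2 - \<nu>)) + 1 / (32 * \<nu>) * (?W r * (r\<^sup>2 - \<nu>) ^ 2)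
        - 1 / (1600 * \<nu>\<^sup>2) * (?W r * (r\<^sup>2 - \<nu>) ^ 4))
      (60 * \<epsilon> / (400 * ?s) * 0 + 1 / (32 * \<nu>) * (2 * \<nu> * ?M) - 1 / (1600 * \<nu>\<^sup>2) * (12 * \<nu> * (\<nu> + 4) * ?M))"
    (is "has_bochner_integral lborel _ ?I")
    unfolding \<nu>_def
    by (intro has_bochner_integral_diff has_bochner_integral_add has_bochner_integral_mult_right
        radial_central_moments)
  have integrand: "60 * \<epsilon> / (400 * ?s) * (?W r * (r\<^sup>2 - \<nu>)) + 1 / (32 * \<nu>) * (?W r * (r\<^sup>2 - \<nu>) ^ 2)
        - 1 / (1600 * \<nu>\<^sup>2) * (?W r * (r\<^sup>2 - \<nu>) ^ 4)
      = ?W r * tail_polynomial (z r)" for r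
  proof -
    have z2: "(z r)\<^sup>2 = (r\<^sup>2 - \<nu>)\<^sup>2 / (2 * \<nu>)"
      using assms(1) s by (simp add: z_def power_divide power_mult_distrib)
    have "z r ^ 4 = ((z r)\<^sup>2)\<^sup>2"
      by (simp flip: power_mult)
    also have "\<dots> = (r\<^sup>2 - \<nu>) ^ 4 / (4 * \<nu>\<^sup>2)"
      by (simp add: z2 power_divide power_mult_distrib flip: power_mult)
    finally have "z r ^ 4 = (r\<^sup>2 - \<nu>) ^ 4 / (4 * \<nu>\<^sup>2)" .
    with z2 s \<nu> show ?thesis
      by (simp add: tail_polynomial_def z_def field_simps)
  qed
  have result: "?I = (22 - 12 / \<nu>) / 400 * ?M"
    using \<nu> by (simp add: field_simps power2_eq_square)
  from int show ?thesis
    unfolding integrand result .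
qed

lemma radial_weight_tail_ge:
  fixes m :: nat and \<epsilon> :: real and R :: "real set"
  assumes "\<epsilon>\<^sup>2 = 1" "R \<in> sets borel"
    and "\<And>r. 0 \<le> r \<Longrightarrow> 0 < \<epsilon> * (r\<^sup>2 - (real m + 1)) \<Longrightarrow> r \<in> R"
  shows "radial_moment m / 40 \<le> (\<integral>r. indicator R r * radial_weight m r \<partial>lborel)"
proof -
  let ?\<nu> = "real m + 1"
  let ?z = "\<lambda>r. \<epsilon> * (r\<^sup>2 - ?\<nu>) / sqrt (2 * ?\<nu>)"
  let ?p = "\<lambda>r. radial_weight m r * tail_polynomial (?z r)"
  have p: "has_bochner_integral lborel ?p ((22 - 12 / ?\<nu>) / 400 * radial_moment m)"
    using has_bochner_integral_radial_weight_tail_polynomial[OF assms(1), of m] by simp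
  have "radial_moment m / 40 \<le> (22 - 12 / ?\<nu>) / 400 * radial_moment m"
    using radial_moment_pos[of m] by (simp add: field_simps)
  also have "\<dots> = (\<integral>r. ?p r \<partial>lborel)"
    by (rule has_bochner_integral_integral_eq[OF p, symmetric])
  also have "\<dots> \<le> (\<integral>r. indicator R r * radial_weight m r \<partial>lborel)"
  proof (rule integral_mono)
    show "integrable lborel ?p"
      using p by (rule integrable.intros)
    show "integrable lborel (\<lambda>r. indicator R r * radial_weight m r)"
      using assms(2) by (rule integrable_indicator_radial_weight)
    fix r :: real
    show "?p r \<le> indicator R r * radial_weight m r"
    proof (cases "0 \<le> r")
      case True
      have "0 < sqrt (2 * ?\<nu>)"
        by simp
      then have "0 < ?z r \<Longrightarrow> r \<in> R"
        using assms(3)[OF True] by (simp add: zero_less_divide_iff)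
      then have ind: "(if 0 < ?z r then 1 else 0) \<le> (indicator R r :: real)"
        by (simp split: split_indicator)
      have "?p r \<le> radial_weight m r * (if 0 < ?z r then 1 else 0)"
        by (rule mult_left_mono[OF tail_polynomial_le_indicator radial_weight_nonneg])
      also have "\<dots> = (if 0 < ?z r then 1 else 0) * radial_weight m r"
        by (rule mult.commute)
      also have "\<dots> \<le> indicator R r * radial_weight m r"
        using ind radial_weight_nonneg by (rule mult_right_mono)
      finally show ?thesis .
    qed (simp add: radial_weight_def)
  qed
  finally show ?thesis .
qed

section \<open>The Gaussian measure of a radial sector\<close>

lemma gauss_n_density_eq_prod:
  "(2 * pi) powr (- real n / 2) * exp (- (vnorm_n n x)\<^sup>2 / 2) = (\<Prod>i<n. std_normal_density (x i))"
proof -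
  have "(2 * pi) powr (- real n / 2) = inverse (((2 * pi) powr (1 / 2)) powr real n)"
    by (simp add: powr_powr flip: powr_minus)
  also have "\<dots> = (\<Prod>i<n. 1 / sqrt (2 * pi))"
    by (simp add: powr_half_sqrt powr_realpow power_one_over inverse_eq_divide)
  finally have "(2 * pi) powr (- real n / 2) = (\<Prod>i<n. 1 / sqrt (2 * pi))" .
  moreover have "exp (- (vnorm_n n x)\<^sup>2 / 2) = (\<Prod>i<n. exp (- (x i)\<^sup>2 / 2))"
    by (simp add: vnorm_n_def sum_nonneg sum_negf sum_divide_distrib flip: exp_sum)
  ultimately show ?thesis
    unfolding std_normal_density_def prod.distrib by simp
qed

lemma prob_space_gauss_n: "prob_space (gauss_n n)"
proof (rule prob_spaceI)
  have [measurable]: "(\<lambda>x. \<Prod>i<n. std_normal_density (x i)) \<in> borel_measurable (leb_n n)"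
    unfolding leb_n_def by measurable
  have "emeasure (gauss_n n) (space (leb_n n))
      = (\<integral>\<^sup>+x. (\<Prod>i<n. ennreal (std_normal_density (x i))) \<partial>leb_n n)"
    unfolding gauss_n_def gauss_n_density_eq_prod
    by (subst emeasure_density) (auto simp: prod_ennreal intro!: nn_integral_cong)
  also have "\<dots> = (\<Prod>i<n. \<integral>\<^sup>+t. ennreal (std_normal_density t) \<partial>lborel)"
    unfolding leb_n_def by (rule lborel_product.product_nn_integral_prod) auto
  also have "\<dots> = 1"
    by (simp add: nn_integral_eq_integral)
  finally show "emeasure (gauss_n n) (space (gauss_n n)) = 1"
    by (simp add: gauss_n_def)
qed

lemma emeasure_gauss_n_radial_sector:
  assumes n: "1 \<le> n" and C: "radial_cone_n n D \<in> sets (leb_n n)" and R [measurable]: "R \<in> sets borel"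
  shows "emeasure (gauss_n n) (radial_cone_n n D \<inter> (vnorm_n n -` R \<inter> space (leb_n n)))
    = ennreal (cone_volume_n n D * (real n * (2 * pi) powr (- real n / 2)))
      * ennreal (\<integral>r. indicator R r * radial_weight (n - 1) r \<partial>lborel)"
proof -
  let ?k = "(2 * pi) powr (- real n / 2)" and ?w = "cone_volume_n n D"
  let ?g = "\<lambda>r. ennreal (?k * exp (- r\<^sup>2 / 2)) * indicator R r"
  have "emeasure (gauss_n n) (radial_cone_n n D \<inter> (vnorm_n n -` R \<inter> space (leb_n n)))
      = (\<integral>\<^sup>+x. indicator (radial_cone_n n D) x * ?g (vnorm_n n x) \<partial>leb_n n)"
    unfolding gauss_n_def using C
    by (subst emeasure_density) (auto intro!: nn_integral_cong split: split_indicator)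
  also have "\<dots> = (\<integral>\<^sup>+r. ennreal (?w * real n * r ^ (n - 1)) * indicator {0<..} r * ?g r \<partial>lborel)"
    using n C by (rule nn_integral_radial_cone_n) measurable
  also have "\<dots> = (\<integral>\<^sup>+r. ennreal (?w * (real n * ?k)) * ennreal (indicator R r * radial_weight (n - 1) r) \<partial>lborel)"
  proof -
    have "ennreal (?w * real n * r ^ (n - 1)) * indicator {0<..} r * ?g r
        = ennreal (?w * (real n * ?k)) * ennreal (indicator R r * radial_weight (n - 1) r)"
      if "r \<noteq> 0" for r
    proof (cases "0 < r")
      case True
      then have "?w * real n * r ^ (n - 1) * (?k * exp (- r\<^sup>2 / 2))
          = ?w * (real n * ?k) * (exp (- r\<^sup>2 / 2) * r ^ (n - 1))"
        by (simp add: algebra_simps)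
      with True show ?thesis
        by (simp add: radial_weight_def ennreal_mult'[symmetric] split: split_indicator)
    next
      case False
      with that show ?thesis
        by (simp add: radial_weight_def)
    qed
    with AE_lborel_singleton[of 0] show ?thesis
      by (intro nn_integral_cong_AE) (auto elim!: eventually_mono)
  qed
  also have "\<dots> = ennreal (?w * (real n * ?k)) * ennreal (\<integral>r. indicator R r * radial_weight (n - 1) r \<partial>lborel)"
    using integrable_indicator_radial_weight[OF R, of "n - 1"]
    by (simp add: nn_integral_cmult nn_integral_eq_integral radial_weight_nonneg)
  finally show ?thesis .
qed

lemma cone_volume_n_UNIV_normalization:
  assumes n: "1 \<le> n"
  shows "cone_volume_n n UNIV * (real n * (2 * pi) powr (- real n / 2)) * radial_moment (n - 1) = 1"
proof -
  interpret prob_space "gauss_n n"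
    by (rule prob_space_gauss_n)
  have null: "{origin_n n} \<in> null_sets (gauss_n n)"
    using origin_n_null_sets[OF n] AE_not_in[OF origin_n_null_sets[OF n]]
    unfolding gauss_n_def by (subst null_sets_density_iff) auto
  have C: "radial_cone_n n UNIV \<in> sets (leb_n n)"
    using n by (rule sets_radial_cone_n_UNIV)
  have "ennreal (cone_volume_n n UNIV * (real n * (2 * pi) powr (- real n / 2))) * ennreal (radial_moment (n - 1))
      = emeasure (gauss_n n) (space (leb_n n) - {origin_n n})"
    using emeasure_gauss_n_radial_sector[OF n C, of UNIV]
    by (simp add: radial_moment_def radial_cone_n_UNIV Int_absorb2 Diff_subset)
  also have "\<dots> = 1"
    using null emeasure_space_1 by (simp add: emeasure_Diff_null_set gauss_n_def)
  finally show ?thesis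
    using radial_moment_pos[of "n - 1"] by (simp add: ennreal_mult'[symmetric])
qed

lemma measure_gauss_n_radial_sector:
  assumes n: "1 \<le> n" and C: "radial_cone_n n D \<in> sets (leb_n n)" and R: "R \<in> sets borel"
  shows "measure (gauss_n n) (radial_cone_n n D \<inter> (vnorm_n n -` R \<inter> space (leb_n n)))
    = sigma_n n D * (\<integral>r. indicator R r * radial_weight (n - 1) r \<partial>lborel) / radial_moment (n - 1)"
proof -
  let ?c = "real n * (2 * pi) powr (- real n / 2)"
  let ?I = "\<integral>r. indicator R r * radial_weight (n - 1) r \<partial>lborel"
  have I: "0 \<le> ?I"
    by (simp add: radial_weight_nonneg)
  have "measure (gauss_n n) (radial_cone_n n D \<inter> (vnorm_n n -` R \<inter> space (leb_n n)))
      = cone_volume_n n D * ?c * ?I"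
    using emeasure_gauss_n_radial_sector[OF n C R] I
    by (intro measure_eq_emeasure_eq_ennreal) (simp_all add: ennreal_mult'[symmetric])
  also have "?c = 1 / (cone_volume_n n UNIV * radial_moment (n - 1))"
  proof -
    have "?c * (cone_volume_n n UNIV * radial_moment (n - 1)) = 1"
      using cone_volume_n_UNIV_normalization[OF n] by (simp only: mult_ac)
    then show ?thesis
      by (auto simp: eq_divide_eq)
  qed
  finally show ?thesis
    by (simp add: sigma_n_eq_cone_volume_n[OF n C])
qed

lemma measure_gauss_n_ge_sigma_n:
  assumes n: "1 \<le> n" and C: "radial_cone_n n D \<in> sets (leb_n n)" and R: "R \<in> sets borel"
    and X: "X \<in> sets (leb_n n)" and sector: "radial_cone_n n D \<inter> (vnorm_n n -` R \<inter> space (leb_n n)) \<subseteq> X"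
    and tail: "radial_moment (n - 1) / 40 \<le> (\<integral>r. indicator R r * radial_weight (n - 1) r \<partial>lborel)"
  shows "1 / 40 * sigma_n n D \<le> measure (gauss_n n) X"
proof -
  interpret prob_space "gauss_n n"
    by (rule prob_space_gauss_n)
  have "0 \<le> sigma_n n D"
    by (simp add: sigma_n_def)
  then have "1 / 40 * sigma_n n D
      \<le> sigma_n n D * (\<integral>r. indicator R r * radial_weight (n - 1) r \<partial>lborel) / radial_moment (n - 1)"
    using tail radial_moment_pos[of "n - 1"] by (simp add: field_simps mult_left_mono)
  also have "\<dots> = measure (gauss_n n) (radial_cone_n n D \<inter> (vnorm_n n -` R \<inter> space (leb_n n)))"
    by (rule measure_gauss_n_radial_sector[OF n C R, symmetric])
  also have "\<dots> \<le> measure (gauss_n n) X"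
    using X sector by (intro finite_measure_mono) (auto simp: gauss_n_def)
  finally show ?thesis .
qed

section \<open>Star-shaped sets\<close>

lemma radial_cone_n_atMost_subset_vscale_n_image:
  assumes K: "star_shaped_n n K" and c: "0 < c"
  shows "radial_cone_n n K \<inter> (vnorm_n n -` {..c} \<inter> space (leb_n n)) \<subseteq> vscale_n n c ` K"
proof
  fix y
  assume "y \<in> radial_cone_n n K \<inter> (vnorm_n n -` {..c} \<inter> space (leb_n n))"
  then have y: "y \<in> space (leb_n n)" "vnorm_n n y \<noteq> 0" "direction_n n y \<in> K" "vnorm_n n y \<le> c"
    by (auto simp: radial_cone_n_def)
  then have "vnorm_n n y / c \<in> {0..1}"
    using c by simp
  with K y have "vscale_n n (vnorm_n n y / c) (direction_n n y) \<in> K"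
    unfolding star_shaped_n_def by blast
  moreover have "y = vscale_n n c (vscale_n n (vnorm_n n y / c) (direction_n n y))"
    using y c by (simp add: vscale_n_vscale_n vscale_n_vnorm_n_direction_n)
  ultimately show "y \<in> vscale_n n c ` K"
    by blast
qed

lemma radial_cone_n_greaterThan_subset_compl_vscale_n_image:
  assumes K: "star_shaped_n n K" and c: "0 < c"
  shows "radial_cone_n n (space (leb_n n) - K) \<inter> (vnorm_n n -` {c<..} \<inter> space (leb_n n))
    \<subseteq> space (leb_n n) - vscale_n n c ` K"
proof
  fix y
  assume "y \<in> radial_cone_n n (space (leb_n n) - K) \<inter> (vnorm_n n -` {c<..} \<inter> space (leb_n n))"
  then have y: "y \<in> space (leb_n n)" "direction_n n y \<notin> K" "c < vnorm_n n y"
    by (auto simp: radial_cone_n_def)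
  have "y \<notin> vscale_n n c ` K"
  proof
    assume "y \<in> vscale_n n c ` K"
    then obtain x where x: "x \<in> K" and yx: "y = vscale_n n c x"
      by blast
    have "c / vnorm_n n y \<in> {0..1}"
      using y c by simp
    with K x have "vscale_n n (c / vnorm_n n y) x \<in> K"
      unfolding star_shaped_n_def by blast
    moreover have "direction_n n y = vscale_n n (c / vnorm_n n y) x"
      by (simp add: direction_n_def yx vscale_n_vscale_n)
    ultimately show False
      using y by simp
  qed
  with y show "y \<in> space (leb_n n) - vscale_n n c ` K"
    by simp
qed

theorem lemma2:
  shows "\<exists>\<alpha>::real. \<alpha> > 1/60 \<and>
    (\<forall>n::nat. \<forall>K. n \<ge> 1 \<longrightarrow> K \<in> sets (leb_n n) \<longrightarrow> star_shaped_n n K \<longrightarrow>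
       measure (gauss_n n) (vscale_n n (sqrt (real n)) ` K) \<ge> \<alpha> * sigma_n n K \<and>
       measure (gauss_n n) (space (leb_n n) - vscale_n n (sqrt (real n)) ` K)
         \<ge> \<alpha> * sigma_n n (space (leb_n n) - K))"
proof (intro exI[of _ "1 / 40"] conjI allI impI)
  show "(1::real) / 60 < 1 / 40"
    by simp
  fix n :: nat and K
  assume n: "1 \<le> n" and K: "K \<in> sets (leb_n n)" and st: "star_shaped_n n K"
  let ?c = "sqrt (real n)"
  have c: "0 < ?c"
    using n by simp
  have cK: "vscale_n n ?c ` K \<in> sets (leb_n n)"
    using c K by (simp add: sets_vscale_n_image)
  have inner: "radial_moment (n - 1) / 40 \<le> (\<integral>r. indicator {..?c} r * radial_weight (n - 1) r \<partial>lborel)"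
    using n by (intro radial_weight_tail_ge[of "-1"]) (auto simp: of_nat_diff intro: less_imp_le real_less_rsqrt)
  have outer: "radial_moment (n - 1) / 40 \<le> (\<integral>r. indicator {?c<..} r * radial_weight (n - 1) r \<partial>lborel)"
    using n by (intro radial_weight_tail_ge[of 1]) (auto simp: of_nat_diff intro: real_less_lsqrt)
  show "1 / 40 * sigma_n n K \<le> measure (gauss_n n) (vscale_n n ?c ` K)"
    using K by (intro measure_gauss_n_ge_sigma_n[OF n _ _ cK
        radial_cone_n_atMost_subset_vscale_n_image[OF st c] inner]) auto
  show "1 / 40 * sigma_n n (space (leb_n n) - K) \<le> measure (gauss_n n) (space (leb_n n) - vscale_n n ?c ` K)"
    using K cK by (intro measure_gauss_n_ge_sigma_n[OF n _ _ _
        radial_cone_n_greaterThan_subset_compl_vscale_n_image[OF st c] outer]) auto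
qed

end
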